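(* In the setting below, if $\eta \geq \eta_0$ and an oscillation happens at iteration $t$, then $\hat{w}_t \leq \eta/\gamma$.
   Context: Dimension $d=2$. Data $x_1,\dots,x_n\in\mathbb{R}^2$ with $\|x_i\|\le 1$, linearly separable (some $w$ has $\langle w,x_i\rangle>0$ for all $i$). $F(w) = \frac{1}{n}\sum_{i=1}^n \log(1+\exp(-\langle w, x_i\rangle))$. Maximum margin $\gamma = \max_{\|w\|=1}\min_i \langle w, x_i\rangle$ with maximizer the unit vector $w_*$; $v_*$ is a fixed unit vector orthogonal to $w_*$. Gradient descent: $w_0=0$, $w_{t+1} = w_t - \eta\nabla F(w_t)$ with constant $\eta>0$. $\hat{w}_t = \langle w_t, w_*\rangle$, $\tilde{w}_t = \langle w_t, v_*\rangle$. $\eta_0 = \max(n, \frac{32}{\gamma^2}\log\frac{256}{\gamma^2})$. $\lambda = \frac{1}{\gamma}\log\frac{1}{\exp(1/(8\eta))-1}$. An oscillation happens at iteration $t\ge 0$ if all of: (1) $\hat{w}_t \geq \lambda$; (2) $F(w_t) > 1/(8\eta)$ and $F(w_{t+1}) > 1/(8\eta)$; (3) $\tilde{w}_{t+1}\tilde{w}_t < 0$. *)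

theory Defs
  imports "HOL-Analysis.Analysis"
begin

definition logloss :: "nat \<Rightarrow> (nat \<Rightarrow> real^2) \<Rightarrow> real^2 \<Rightarrow> real" where
  "logloss n x w = (1 / real n) * (\<Sum>i<n. ln (1 + exp (- (w \<bullet> x i))))"

definition logloss_grad :: "nat \<Rightarrow> (nat \<Rightarrow> real^2) \<Rightarrow> real^2 \<Rightarrow> real^2" where
  "logloss_grad n x w = (1 / real n) *\<^sub>R (\<Sum>i<n. (- 1 / (1 + exp (w \<bullet> x i))) *\<^sub>R x i)"

primrec gd :: "nat \<Rightarrow> (nat \<Rightarrow> real^2) \<Rightarrow> real \<Rightarrow> nat \<Rightarrow> real^2" where
  "gd n x \<eta> 0 = 0"
| "gd n x \<eta> (Suc t) = gd n x \<eta> t - \<eta> *\<^sub>R logloss_grad n x (gd n x \<eta> t)"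

definition max_margin :: "nat \<Rightarrow> (nat \<Rightarrow> real^2) \<Rightarrow> real" where
  "max_margin n x = (SUP w \<in> {w. norm w = 1}. Min ((\<lambda>i. w \<bullet> x i) ` {..<n}))"

definition eta0 :: "nat \<Rightarrow> real \<Rightarrow> real" where
  "eta0 n \<gamma> = max (real n) (32 / \<gamma>\<^sup>2 * ln (256 / \<gamma>\<^sup>2))"

definition lam :: "real \<Rightarrow> real \<Rightarrow> real" where
  "lam \<eta> \<gamma> = (1 / \<gamma>) * ln (1 / (exp (1 / (8 * \<eta>)) - 1))"

definition oscillation ::
  "nat \<Rightarrow> (nat \<Rightarrow> real^2) \<Rightarrow> real \<Rightarrow> real^2 \<Rightarrow> real^2 \<Rightarrow> nat \<Rightarrow> bool" where
  "oscillation n x \<eta> ws vs t \<longleftrightarrow>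
     (let \<gamma> = max_margin n x; w = gd n x \<eta> in
       w t \<bullet> ws \<ge> lam \<eta> \<gamma> \<and>
       logloss n x (w t) > 1 / (8 * \<eta>) \<and> logloss n x (w (Suc t)) > 1 / (8 * \<eta>) \<and>
       (w (Suc t) \<bullet> vs) * (w t \<bullet> vs) < 0)"

end

theory Submission
  imports Defs
begin

text \<open>Let \<open>c = 1/(8\<eta>)\<close> and \<open>L = ln (1/(exp c - 1))\<close>, so that \<open>L = \<gamma> \<lambda>\<close>. If the loss at \<open>w\<close> exceeds
  \<open>c\<close>, some data point has \<open>\<langle>w, x\<^sub>i\<rangle> < L\<close>; expanding this inner product in the orthonormal frame
  \<open>w\<^sub>*, v\<^sub>*\<close> and using \<open>\<langle>x\<^sub>i, w\<^sub>*\<rangle> \<ge> \<gamma>\<close> gives \<open>|\<langle>w, v\<^sub>*\<rangle>| > \<gamma> \<langle>w, w\<^sub>*\<rangle> - L\<close>. In an oscillation this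
  holds at \<open>t\<close> and \<open>t + 1\<close>; the \<open>v\<^sub>*\<close>-component changes sign, a single step moves it by at most
  \<open>\<eta>\<close>, and the \<open>w\<^sub>*\<close>-component never decreases. Hence \<open>\<gamma> \<langle>w\<^sub>t, w\<^sub>*\<rangle> - L < \<eta>/2\<close>, and
  \<open>L \<le> ln (8 \<eta>) \<le> \<eta>/2\<close> once \<open>\<eta> \<ge> 32\<close>.\<close>

lemma orthonormal_pair_expansion:
  fixes u v a :: "'a::euclidean_space"
  assumes "DIM('a) = 2" and "norm u = 1" and "norm v = 1" and "u \<bullet> v = 0"
  shows "a = (a \<bullet> u) *\<^sub>R u + (a \<bullet> v) *\<^sub>R v"
proof (rule ccontr)
  define r where "r = a - (a \<bullet> u) *\<^sub>R u - (a \<bullet> v) *\<^sub>R v"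
  assume "a \<noteq> (a \<bullet> u) *\<^sub>R u + (a \<bullet> v) *\<^sub>R v"
  then have "r \<noteq> 0"
    unfolding r_def by (metis diff_diff_eq eq_iff_diff_eq_0)
  have uu: "u \<bullet> u = 1" and vv: "v \<bullet> v = 1"
    using assms(2,3) by (simp_all add: dot_square_norm)
  have vu: "v \<bullet> u = 0"
    using assms(4) by (simp add: inner_commute)
  have "r \<bullet> u = 0" and "r \<bullet> v = 0"
    using uu vv assms(4) vu by (simp_all add: r_def inner_diff_left)
  then have "pairwise orthogonal {u, v, r}"
    using assms(4) by (auto simp: pairwise_def orthogonal_def inner_commute)
  moreover have "0 \<notin> {u, v, r}"
    using assms(2,3) \<open>r \<noteq> 0\<close> by auto
  ultimately have "independent {u, v, r}"
    by (rule pairwise_orthogonal_independent)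
  moreover have "u \<noteq> v" and "u \<noteq> r" and "v \<noteq> r"
    using \<open>r \<bullet> u = 0\<close> \<open>r \<bullet> v = 0\<close> assms(4) uu vv by auto
  then have "card {u, v, r} = 3"
    by simp
  ultimately show False
    using independent_bound[of "{u, v, r}"] assms(1) by simp
qed

lemma inner_orthonormal_pair_expansion:
  fixes u v a b :: "'a::euclidean_space"
  assumes "DIM('a) = 2" and "norm u = 1" and "norm v = 1" and "u \<bullet> v = 0"
  shows "a \<bullet> b = (a \<bullet> u) * (b \<bullet> u) + (a \<bullet> v) * (b \<bullet> v)"
proof -
  have "a \<bullet> b = a \<bullet> ((b \<bullet> u) *\<^sub>R u + (b \<bullet> v) *\<^sub>R v)"
    using orthonormal_pair_expansion[OF assms] by simp
  then show ?thesis by (simp add: inner_add_right)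
qed

lemma inverse_one_plus_exp_bounds:
  fixes z :: real
  shows "0 < 1 / (1 + exp z)" and "1 / (1 + exp z) \<le> 1"
  by (simp_all add: add_pos_pos)

lemma gd_Suc_inner:
  "gd n x \<eta> (Suc t) \<bullet> u = gd n x \<eta> t \<bullet> u
     + \<eta> / real n * (\<Sum>i<n. 1 / (1 + exp (gd n x \<eta> t \<bullet> x i)) * (x i \<bullet> u))"
proof -
  have "logloss_grad n x (gd n x \<eta> t)
      = - ((1 / real n) *\<^sub>R (\<Sum>i<n. (1 / (1 + exp (gd n x \<eta> t \<bullet> x i))) *\<^sub>R x i))"
    unfolding logloss_grad_def by (simp add: sum_negf)
  then show ?thesis
    by (simp add: inner_add_left inner_sum_left)
qed

lemma gd_inner_mono:
  assumes "\<eta> \<ge> 0" and "\<forall>i<n. 0 \<le> x i \<bullet> u"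
  shows "gd n x \<eta> t \<bullet> u \<le> gd n x \<eta> (Suc t) \<bullet> u"
proof -
  have "0 \<le> (\<Sum>i<n. 1 / (1 + exp (gd n x \<eta> t \<bullet> x i)) * (x i \<bullet> u))"
    using assms(2) inverse_one_plus_exp_bounds(1) by (intro sum_nonneg) (simp add: less_imp_le)
  then show ?thesis
    using assms(1) by (simp only: gd_Suc_inner) simp
qed

lemma gd_inner_nonneg:
  assumes "\<eta> \<ge> 0" and "\<forall>i<n. 0 \<le> x i \<bullet> u"
  shows "0 \<le> gd n x \<eta> t \<bullet> u"
proof (induction t)
  case 0
  then show ?case by simp
next
  case (Suc t)
  then show ?case using gd_inner_mono[OF assms, of t] by linarith
qed

lemma gd_Suc_inner_dist_le:
  assumes "\<eta> \<ge> 0" and "\<forall>i<n. norm (x i) \<le> 1" and "norm u \<le> 1"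
  shows "\<bar>gd n x \<eta> (Suc t) \<bullet> u - gd n x \<eta> t \<bullet> u\<bar> \<le> \<eta>"
proof -
  let ?a = "\<lambda>i. 1 / (1 + exp (gd n x \<eta> t \<bullet> x i))"
  have term_le: "\<bar>?a i * (x i \<bullet> u)\<bar> \<le> 1" if "i < n" for i
  proof -
    have "\<bar>x i \<bullet> u\<bar> \<le> norm (x i) * norm u"
      by (rule Cauchy_Schwarz_ineq2)
    also have "\<dots> \<le> 1"
      using assms(2,3) that by (simp add: mult_le_one)
    finally have "\<bar>x i \<bullet> u\<bar> \<le> 1" .
    moreover have "0 < ?a i" and "?a i \<le> 1"
      by (rule inverse_one_plus_exp_bounds)+
    ultimately show ?thesis
      by (auto simp only: abs_mult abs_of_pos intro!: mult_le_one)
  qed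
  have "\<bar>\<Sum>i<n. ?a i * (x i \<bullet> u)\<bar> \<le> (\<Sum>i<n. \<bar>?a i * (x i \<bullet> u)\<bar>)"
    by (rule sum_abs)
  also have "\<dots> \<le> (\<Sum>i<n. 1)"
    using term_le by (intro sum_mono) simp
  finally have "\<bar>\<Sum>i<n. ?a i * (x i \<bullet> u)\<bar> \<le> real n"
    by simp
  then have "\<eta> / real n * \<bar>\<Sum>i<n. ?a i * (x i \<bullet> u)\<bar> \<le> \<eta> / real n * real n"
    using assms(1) by (intro mult_left_mono) auto
  also have "\<dots> \<le> \<eta>"
    using assms(1) by (cases "n = 0") auto
  finally show ?thesis
    using assms(1) by (simp only: gd_Suc_inner) (simp add: abs_mult)
qed

lemma logloss_gt_imp_point_loss_gt:
  assumes "n > 0" and "logloss n x w > c"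
  obtains i where "i < n" and "ln (1 + exp (- (w \<bullet> x i))) > c"
proof -
  have "\<exists>i<n. ln (1 + exp (- (w \<bullet> x i))) > c"
  proof (rule ccontr)
    assume "\<not> ?thesis"
    then have "(\<Sum>i<n. ln (1 + exp (- (w \<bullet> x i)))) \<le> real n * c"
      using sum_bounded_above[of "{..<n}" "\<lambda>i. ln (1 + exp (- (w \<bullet> x i)))" c] by fastforce
    then have "logloss n x w \<le> c"
      using assms(1) by (simp add: logloss_def field_simps)
    then show False
      using assms(2) by simp
  qed
  then show ?thesis
    using that by blast
qed

lemma ln_one_plus_exp_neg_gt_imp_less:
  fixes z c :: real
  assumes "c > 0" and "ln (1 + exp (- z)) > c"
  shows "z < ln (1 / (exp c - 1))"
proof -
  have pos: "exp c - 1 > 0"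
    using assms(1) by simp
  have "exp c < 1 + exp (- z)"
    using assms(2) by (metis exp_less_cancel_iff exp_ln add_pos_pos exp_gt_zero zero_less_one)
  then have "ln (exp c - 1) < - z"
    using pos by (metis add.commute diff_less_eq ln_less_cancel_iff exp_gt_zero ln_exp)
  moreover have "ln (1 / (exp c - 1)) = - ln (exp c - 1)"
    using pos by (simp add: ln_div)
  ultimately show ?thesis by simp
qed

lemma ln_mult_8_le_half:
  fixes e :: real
  assumes "e \<ge> 32"
  shows "ln (8 * e) \<le> e / 2"
proof -
  have "ln (8 * e) = ln 32 + ln (e / 4)"
    using assms by (simp flip: ln_mult_pos)
  moreover have "ln (e / 4) \<le> e / 4 - 1"
    using assms by (intro ln_le_minus_one) simp
  moreover have "ln (32::real) = 5 * ln 2"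
    using ln_realpow[of 2 5] by simp
  moreover have "ln (2::real) \<le> 1"
    using ln_le_minus_one[of 2] by simp
  ultimately show ?thesis
    using assms by linarith
qed

lemma ln_inverse_exp_minus_one_le:
  fixes c :: real
  assumes "c > 0"
  shows "ln (1 / (exp c - 1)) \<le> ln (1 / c)"
proof -
  have "c \<le> exp c - 1"
    using exp_ge_add_one_self[of c] by linarith
  then show ?thesis
    using assms by (simp add: frac_le)
qed

lemma min_inner_le_one:
  fixes x :: "nat \<Rightarrow> real^2" and w :: "real^2"
  assumes "n > 0" and "\<forall>i<n. norm (x i) \<le> 1" and "norm w = 1"
  shows "Min ((\<lambda>i. w \<bullet> x i) ` {..<n}) \<le> 1"
proof -
  have "Min ((\<lambda>i. w \<bullet> x i) ` {..<n}) \<le> w \<bullet> x 0"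
    using assms(1) by (intro Min_le) auto
  also have "\<dots> \<le> norm w * norm (x 0)"
    by (rule norm_cauchy_schwarz)
  also have "\<dots> \<le> 1"
    using assms by simp
  finally show ?thesis .
qed

lemma max_margin_le_one:
  assumes "n > 0" and "\<forall>i<n. norm (x i) \<le> 1"
  shows "max_margin n x \<le> 1"
proof -
  have "norm (axis 1 1 :: real^2) = 1"
    by simp
  then have "{w :: real^2. norm w = 1} \<noteq> {}"
    by blast
  then show ?thesis
    unfolding max_margin_def by (rule cSUP_least) (use min_inner_le_one[OF assms] in auto)
qed

lemma max_margin_pos:
  assumes "n > 0" and "\<forall>i<n. norm (x i) \<le> 1" and "\<exists>w. \<forall>i<n. w \<bullet> x i > 0"
  shows "max_margin n x > 0"
proof -
  obtain w where w: "\<forall>i<n. w \<bullet> x i > 0"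
    using assms(3) by blast
  then have "w \<noteq> 0"
    using assms(1) by fastforce
  define u where "u = w /\<^sub>R norm w"
  have "norm u = 1"
    using \<open>w \<noteq> 0\<close> by (simp add: u_def)
  have "\<forall>i<n. u \<bullet> x i > 0"
    using w \<open>w \<noteq> 0\<close> by (simp add: u_def)
  then have "0 < Min ((\<lambda>i. u \<bullet> x i) ` {..<n})"
    using assms(1) by (subst Min_gr_iff) auto
  also have "\<dots> \<le> max_margin n x"
    unfolding max_margin_def using \<open>norm u = 1\<close> min_inner_le_one[OF assms(1,2)]
    by (intro cSUP_upper bdd_aboveI2) auto
  finally show ?thesis .
qed

lemma eta0_ge_32:
  assumes "0 < \<gamma>" and "\<gamma> \<le> 1"
  shows "32 \<le> eta0 n \<gamma>"
proof -
  have "0 < \<gamma>\<^sup>2" and "\<gamma>\<^sup>2 \<le> 1"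
    using assms by (auto simp: power_le_one)
  then have "32 \<le> 32 / \<gamma>\<^sup>2" and "256 \<le> 256 / \<gamma>\<^sup>2"
    by (simp_all add: field_simps)
  moreover have "1 \<le> ln (256::real)"
    using exp_le by (simp add: ln_ge_iff)
  ultimately have "1 \<le> ln (256 / \<gamma>\<^sup>2)"
    by (smt (verit) ln_le_cancel_iff)
  with \<open>32 \<le> 32 / \<gamma>\<^sup>2\<close> have "32 * 1 \<le> 32 / \<gamma>\<^sup>2 * ln (256 / \<gamma>\<^sup>2)"
    by (intro mult_mono) auto
  then show ?thesis
    unfolding eta0_def by simp
qed

lemma logloss_gt_imp_orthogonal_component_gt:
  fixes v ws vs :: "real^2"
  assumes "n > 0" and "\<forall>i<n. norm (x i) \<le> 1"
    and "norm ws = 1" and "norm vs = 1" and "vs \<bullet> ws = 0"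
    and "\<forall>i<n. \<gamma> \<le> ws \<bullet> x i" and "c > 0"
    and "logloss n x v > c" and "0 \<le> v \<bullet> ws"
  shows "\<gamma> * (v \<bullet> ws) - ln (1 / (exp c - 1)) < \<bar>v \<bullet> vs\<bar>"
proof -
  obtain i where "i < n" and "ln (1 + exp (- (v \<bullet> x i))) > c"
    using logloss_gt_imp_point_loss_gt[OF assms(1,8)] .
  then have "v \<bullet> x i < ln (1 / (exp c - 1))"
    using assms(7) ln_one_plus_exp_neg_gt_imp_less by blast
  moreover have "v \<bullet> x i = (v \<bullet> ws) * (x i \<bullet> ws) + (v \<bullet> vs) * (x i \<bullet> vs)"
    using assms(3-5) by (intro inner_orthonormal_pair_expansion) (auto simp: inner_commute)
  moreover have "(v \<bullet> ws) * \<gamma> \<le> (v \<bullet> ws) * (x i \<bullet> ws)"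
    using assms(6,9) \<open>i < n\<close> by (simp add: inner_commute mult_left_mono)
  moreover have "\<bar>x i \<bullet> vs\<bar> \<le> 1"
    using Cauchy_Schwarz_ineq2[of "x i" vs] assms(2,4) \<open>i < n\<close> by (auto intro: order_trans)
  then have "\<bar>(v \<bullet> vs) * (x i \<bullet> vs)\<bar> \<le> \<bar>v \<bullet> vs\<bar>"
    by (simp add: abs_mult mult_left_le)
  ultimately show ?thesis
    by (simp add: algebra_simps)
qed

lemma gd_oscillation_bound:
  fixes x :: "nat \<Rightarrow> real^2" and ws vs :: "real^2"
  assumes "n > 0" and "\<forall>i<n. norm (x i) \<le> 1"
    and "norm ws = 1" and "norm vs = 1" and "vs \<bullet> ws = 0"
    and "0 \<le> \<gamma>" and "\<forall>i<n. \<gamma> \<le> ws \<bullet> x i" and "0 \<le> \<eta>" and "c > 0"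
    and "logloss n x (gd n x \<eta> t) > c" and "logloss n x (gd n x \<eta> (Suc t)) > c"
    and "(gd n x \<eta> (Suc t) \<bullet> vs) * (gd n x \<eta> t \<bullet> vs) < 0"
  shows "\<gamma> * (gd n x \<eta> t \<bullet> ws) - ln (1 / (exp c - 1)) < \<eta> / 2"
proof -
  let ?w = "gd n x \<eta>"
  have "\<forall>i<n. 0 \<le> x i \<bullet> ws"
    using assms(6,7) by (auto simp: inner_commute intro: order_trans)
  then have "0 \<le> ?w t \<bullet> ws" and mono: "?w t \<bullet> ws \<le> ?w (Suc t) \<bullet> ws"
    using gd_inner_nonneg gd_inner_mono assms(8) by simp_all
  note transverse = logloss_gt_imp_orthogonal_component_gt[OF assms(1-5,7,9)]
  have "\<gamma> * (?w t \<bullet> ws) - ln (1 / (exp c - 1)) < \<bar>?w t \<bullet> vs\<bar>"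
    using transverse assms(10) \<open>0 \<le> ?w t \<bullet> ws\<close> by blast
  moreover have "\<gamma> * (?w (Suc t) \<bullet> ws) - ln (1 / (exp c - 1)) < \<bar>?w (Suc t) \<bullet> vs\<bar>"
    using transverse assms(11) \<open>0 \<le> ?w t \<bullet> ws\<close> mono by simp
  moreover have "\<gamma> * (?w t \<bullet> ws) \<le> \<gamma> * (?w (Suc t) \<bullet> ws)"
    using mono assms(6) by (rule mult_left_mono)
  moreover have "\<bar>?w (Suc t) \<bullet> vs\<bar> + \<bar>?w t \<bullet> vs\<bar> = \<bar>?w (Suc t) \<bullet> vs - ?w t \<bullet> vs\<bar>"
    using assms(12) by (smt (verit) mult_nonneg_nonneg mult_nonpos_nonpos)
  moreover have "\<bar>?w (Suc t) \<bullet> vs - ?w t \<bullet> vs\<bar> \<le> \<eta>"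
    using assms(2,4,8) by (intro gd_Suc_inner_dist_le) auto
  ultimately show ?thesis
    by linarith
qed

theorem lemma4:
  fixes n :: nat and x :: "nat \<Rightarrow> real^2" and \<eta> :: real and ws vs :: "real^2" and t :: nat
  assumes "n \<ge> 1"
    and "\<forall>i<n. norm (x i) \<le> 1"
    and "\<exists>w. \<forall>i<n. w \<bullet> x i > 0"
    and "norm ws = 1"
    and "Min ((\<lambda>i. ws \<bullet> x i) ` {..<n}) = max_margin n x"
    and "norm vs = 1" and "vs \<bullet> ws = 0"
    and "\<eta> > 0"
    and "\<eta> \<ge> eta0 n (max_margin n x)"
    and "oscillation n x \<eta> ws vs t"
  shows "gd n x \<eta> t \<bullet> ws \<le> \<eta> / max_margin n x"
proof -
  define \<gamma> where "\<gamma> = max_margin n x"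
  have n: "n > 0"
    using assms(1) by simp
  have margin: "\<forall>i<n. \<gamma> \<le> ws \<bullet> x i"
    unfolding \<gamma>_def assms(5)[symmetric] by (auto intro!: Min_le)
  have \<gamma>: "0 < \<gamma>" "\<gamma> \<le> 1"
    unfolding \<gamma>_def using max_margin_pos[OF n assms(2,3)] max_margin_le_one[OF n assms(2)] by simp_all
  then have "32 \<le> \<eta>"
    using eta0_ge_32[OF \<gamma>, of n] assms(9) unfolding \<gamma>_def by linarith
  have "ln (1 / (exp (1 / (8 * \<eta>)) - 1)) \<le> ln (8 * \<eta>)"
    using ln_inverse_exp_minus_one_le[of "1 / (8 * \<eta>)"] assms(8) by simp
  also have "\<dots> \<le> \<eta> / 2"
    using \<open>32 \<le> \<eta>\<close> by (rule ln_mult_8_le_half)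
  finally have "ln (1 / (exp (1 / (8 * \<eta>)) - 1)) \<le> \<eta> / 2" .
  moreover have "\<gamma> * (gd n x \<eta> t \<bullet> ws) - ln (1 / (exp (1 / (8 * \<eta>)) - 1)) < \<eta> / 2"
    using assms(10) unfolding oscillation_def Let_def
    by (intro gd_oscillation_bound[OF n assms(2,4,6,7) _ margin]) (use \<gamma> assms(8) in auto)
  ultimately have "\<gamma> * (gd n x \<eta> t \<bullet> ws) < \<eta>"
    by linarith
  then show ?thesis
    using \<gamma>(1) by (simp add: \<gamma>_def field_simps)
qed

end
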